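(* Let $\mathcal H=\mathbb C^5$ with orthonormal basis $\{|i\rangle\}_{i=0}^4$, $|\pm\rangle=(|0\rangle\pm|1\rangle)/\sqrt2$, and $a\in(0,1)$. Define $E_1=|2\rangle\langle2|+a|0\rangle\langle0|+(1-a)|+\rangle\langle+|$, $E_2=|3\rangle\langle3|+a|1\rangle\langle1|$, $E_3=|4\rangle\langle4|+(1-a)|-\rangle\langle-|$. Then $\{E_1,E_2,E_3\}$ is a non-commutative POVM (e.g. $E_2E_3\neq E_3E_2$), yet each $E_k$ is a fixed point of the Heisenberg-picture entanglement breaking channel $\Lambda^*(A)=\sum_{z=1}^3\mathrm{tr}[A\,|z+1\rangle\langle z+1|]E_z$; hence $\{E_k\}$ does not allow for a proof of contextuality of quantum theory.
   Context: A set of observables $\mathcal A$ does not allow for a proof of contextuality of quantum theory if there exist a POVM $\{G_\lambda\}$ and states $\{\sigma_\lambda\}$ (finite index set) with $A_k=\sum_\lambda\mathrm{tr}[\sigma_\lambda A_k]G_\lambda$ for all $\{A_k\}\in\mathcal A$ and all $k$. *)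

theory Defs
  imports "HOL-Analysis.Analysis" "HOL-Library.Numeral_Type" "HOL-Library.Complex_Order"
begin

text \<open>Finite-dimensional quantum mechanics on C^n, with the index type 'n (finite)
  labelling an orthonormal basis. Matrices are complex^'n^'n (row-major, A$i$j).\<close>

definition ket :: "'n::finite \<Rightarrow> complex^'n" where
  "ket i = (\<chi> j. if j = i then 1 else 0)"

definition proj :: "complex^'n::finite \<Rightarrow> complex^'n^'n" where
  "proj v = (\<chi> i j. v$i * cnj (v$j))"

definition cscale :: "complex \<Rightarrow> complex^'n^'m \<Rightarrow> complex^'n^'m" where
  "cscale c M = (\<chi> i j. c * M$i$j)"

text \<open>Positive semidefinite: <v|A|v> is real and nonnegative for all v
  (ordering of complex numbers from HOL-Library.Complex_Order).\<close>
definition psd :: "complex^'n::finite^'n \<Rightarrow> bool" where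
  "psd A \<longleftrightarrow> (\<forall>v::complex^'n. 0 \<le> (\<Sum>i\<in>UNIV. \<Sum>j\<in>UNIV. cnj (v$i) * A$i$j * v$j))"

definition povm :: "'k set \<Rightarrow> ('k \<Rightarrow> complex^'n::finite^'n) \<Rightarrow> bool" where
  "povm K E \<longleftrightarrow> finite K \<and> (\<forall>k\<in>K. psd (E k)) \<and> (\<Sum>k\<in>K. E k) = mat 1"

definition density :: "complex^'n::finite^'n \<Rightarrow> bool" where
  "density \<sigma> \<longleftrightarrow> psd \<sigma> \<and> trace \<sigma> = 1"

definition no_contextuality_proof ::
    "('k set \<times> ('k \<Rightarrow> complex^'n::finite^'n)) set \<Rightarrow> bool" where
  "no_contextuality_proof \<A> \<longleftrightarrow>
     (\<exists>(L::nat set) G \<sigma>. finite L \<and> povm L G \<and> (\<forall>l\<in>L. density (\<sigma> l)) \<and>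
        (\<forall>(K, A)\<in>\<A>. \<forall>k\<in>K. A k = (\<Sum>l\<in>L. cscale (trace (\<sigma> l ** A k)) (G l))))"

end

theory Submission
  imports Defs
begin

text \<open>Each effect E_k carries a private flag: it contains the projector onto |k+1> and
  vanishes on the other two flag vectors. Reading off the flags with the states
  sigma_z = |z+1><z+1| therefore returns delta_zk, so the entanglement breaking channel fixes
  every E_k; and a POVM fixed by such a channel is, after cycling the trace, literally a
  classical model in the sense of no_contextuality_proof. Non-commutativity comes from the
  non-orthogonal vectors |1> and |-> in the qubit block.\<close>

lemma exhaust_5: fixes x :: 5 shows "x = 0 \<or> x = 1 \<or> x = 2 \<or> x = 3 \<or> x = 4"
proof (induct x)
  case (of_int z)
  then have "z = 0 \<or> z = 1 \<or> z = 2 \<or> z = 3 \<or> z = 4" by fastforce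
  then show ?case by auto
qed

lemma sum_UNIV_5: "sum f (UNIV::5 set) = f 0 + f 1 + f 2 + f 3 + f 4"
proof -
  have UNIV_5: "(UNIV::5 set) = {0,1,2,3,4}" using exhaust_5 by auto
  show ?thesis unfolding UNIV_5 by (simp add: ac_simps)
qed

lemma all_5: "(\<forall>i::5. P i) \<longleftrightarrow> P 0 \<and> P 1 \<and> P 2 \<and> P 3 \<and> P 4"
  by (metis exhaust_5)

lemma proj_ket: "proj (ket k) = (\<chi> i j. if i = k \<and> j = k then 1 else 0)"
  unfolding proj_def ket_def by (simp add: vec_eq_iff)

lemma trace_mult_proj_ket: "trace (A ** proj (ket k)) = A $ k $ k"
  unfolding trace_def matrix_matrix_mult_def proj_ket
  by (simp add: if_distrib[of "(*) _"] cong: if_cong) (simp flip: if_if_eq_conj)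

lemma psd_add: "psd A \<Longrightarrow> psd B \<Longrightarrow> psd (A + B)"
  unfolding psd_def by (simp add: distrib_left distrib_right sum.distrib add_nonneg_nonneg)

lemma psd_scaleR:
  assumes "psd A" and "0 \<le> r"
  shows "psd (r *\<^sub>R A)"
  unfolding psd_def
proof
  fix v :: "complex^'a"
  have "(\<Sum>i\<in>UNIV. \<Sum>j\<in>UNIV. cnj (v$i) * (r *\<^sub>R A)$i$j * v$j)
      = of_real r * (\<Sum>i\<in>UNIV. \<Sum>j\<in>UNIV. cnj (v$i) * A$i$j * v$j)"
    unfolding vector_scaleR_component by (simp add: sum_distrib_left scaleR_conv_of_real mult_ac)
  moreover have "0 \<le> (\<Sum>i\<in>UNIV. \<Sum>j\<in>UNIV. cnj (v$i) * A$i$j * v$j)"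
    using assms(1) psd_def by blast
  ultimately show "0 \<le> (\<Sum>i\<in>UNIV. \<Sum>j\<in>UNIV. cnj (v$i) * (r *\<^sub>R A)$i$j * v$j)"
    using assms(2) by (simp add: mult_nonneg_nonneg less_eq_complex_def)
qed

lemma psd_proj: "psd (proj v)"
  unfolding psd_def
proof
  fix x :: "complex^'a"
  define s where "s = (\<Sum>i\<in>UNIV. cnj (v$i) * x$i)"
  have "(\<Sum>i\<in>UNIV. \<Sum>j\<in>UNIV. cnj (x$i) * proj v$i$j * x$j) = cnj s * s"
    unfolding s_def proj_def
    by (simp add: sum_distrib_left sum_distrib_right mult_ac) (rule sum.swap)
  also have "\<dots> = of_real (Re s^2 + Im s^2)" by (simp add: complex_mult_cnj mult.commute)
  also have "0 \<le> \<dots>" unfolding less_eq_complex_def by simp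
  finally show "0 \<le> (\<Sum>i\<in>UNIV. \<Sum>j\<in>UNIV. cnj (x$i) * proj v$i$j * x$j)" .
qed

lemma density_proj_ket: "density (proj (ket k))"
proof -
  have "trace (proj (ket k)) = 1" by (simp add: trace_def proj_ket)
  then show ?thesis unfolding density_def using psd_proj by blast
qed

lemma fixed_point_if_flagged:
  assumes "finite K" and "k \<in> K"
    and flags: "\<forall>z\<in>K. A k $ f z $ f z = (if z = k then 1 else 0)"
  shows "(\<Sum>z\<in>K. cscale (trace (A k ** proj (ket (f z)))) (A z)) = A k"
proof -
  have "(\<Sum>z\<in>K. cscale (trace (A k ** proj (ket (f z)))) (A z))
      = (\<Sum>z\<in>K. if z = k then A z else 0)"
    using flags by (intro sum.cong) (auto simp: trace_mult_proj_ket cscale_def vec_eq_iff)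
  also have "\<dots> = A k" using assms(1,2) by (simp add: sum.delta')
  finally show ?thesis .
qed

lemma no_contextuality_proof_if_fixed_point:
  fixes L :: "nat set"
  assumes "povm L E" and "\<forall>l\<in>L. density (\<sigma> l)"
    and "\<forall>k\<in>L. (\<Sum>l\<in>L. cscale (trace (E k ** \<sigma> l)) (E l)) = E k"
  shows "no_contextuality_proof {(L, E)}"
proof -
  have "trace (E k ** \<sigma> l) = trace (\<sigma> l ** E k)" for k l
    by (rule trace_mul_sym)
  then have "\<forall>k\<in>L. E k = (\<Sum>l\<in>L. cscale (trace (\<sigma> l ** E k)) (E l))"
    using assms(3) by simp
  then show ?thesis
    unfolding no_contextuality_proof_def using assms(1,2) povm_def by blast
qed

definition ket_plus :: "complex^5" where
  "ket_plus = (1 / sqrt 2) *\<^sub>R (ket 0 + ket 1)"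

definition ket_minus :: "complex^5" where
  "ket_minus = (1 / sqrt 2) *\<^sub>R (ket 0 - ket 1)"

definition flag_effect :: "real \<Rightarrow> nat \<Rightarrow> complex^5^5" where
  "flag_effect a k =
     (if k = 1 then proj (ket 2) + a *\<^sub>R proj (ket 0) + (1 - a) *\<^sub>R proj ket_plus
      else if k = 2 then proj (ket 3) + a *\<^sub>R proj (ket 1)
      else proj (ket 4) + (1 - a) *\<^sub>R proj ket_minus)"

lemma proj_ket_plus:
  "proj ket_plus = (\<chi> i j. if (i = 0 \<or> i = 1) \<and> (j = 0 \<or> j = 1) then 1/2 else 0)"
  unfolding proj_def ket_def ket_plus_def
  by (simp add: vec_eq_iff all_5) (simp add: scaleR_conv_of_real)

lemma proj_ket_minus:
  "proj ket_minus = (\<chi> i j. if (i = 0 \<or> i = 1) \<and> (j = 0 \<or> j = 1)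
                              then (if i = j then 1/2 else -1/2) else 0)"
  unfolding proj_def ket_def ket_minus_def
  by (simp add: vec_eq_iff all_5) (simp add: scaleR_conv_of_real)

lemmas flag_effect_explicit = flag_effect_def proj_ket proj_ket_plus proj_ket_minus

lemma povm_flag_effect:
  assumes "0 \<le> a" and "a \<le> 1"
  shows "povm {1,2,3} (flag_effect a)"
proof -
  have "psd (flag_effect a k)" for k
    using assms unfolding flag_effect_def by (auto intro!: psd_add psd_scaleR psd_proj)
  moreover have "(\<Sum>k\<in>{1,2,3}. flag_effect a k) = mat 1"
    unfolding flag_effect_explicit by (simp add: vec_eq_iff all_5 scaleR_conv_of_real mat_def)
  ultimately show ?thesis unfolding povm_def by simp
qed

lemma flag_effect_not_commute:
  assumes "0 < a" and "a < 1"
  shows "flag_effect a 2 ** flag_effect a 3 \<noteq> flag_effect a 3 ** flag_effect a 2"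
proof
  assume "flag_effect a 2 ** flag_effect a 3 = flag_effect a 3 ** flag_effect a 2"
  then have "(flag_effect a 2 ** flag_effect a 3) $ 1 $ 0 = (flag_effect a 3 ** flag_effect a 2) $ 1 $ 0"
    by simp
  then show False
    using assms unfolding flag_effect_explicit
    by (simp add: matrix_matrix_mult_def sum_UNIV_5)
qed

lemma flag_effect_flags:
  assumes "k \<in> {1,2,3}" and "z \<in> {1,2,3}"
  shows "flag_effect a k $ of_nat (z + 1) $ of_nat (z + 1) = (if z = k then 1 else 0)"
  using assms unfolding flag_effect_explicit by (auto simp: scaleR_conv_of_real)

lemma flag_effect_fixed_point:
  assumes "k \<in> {1,2,3}"
  shows "(\<Sum>z\<in>{1,2,3}. cscale (trace (flag_effect a k ** proj (ket (of_nat (z + 1) :: 5))))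
                                   (flag_effect a z)) = flag_effect a k"
  using assms flag_effect_flags by (intro fixed_point_if_flagged) auto

theorem mainTheorem5:
  fixes a :: real
  assumes "0 < a" and "a < 1"
  defines "ketp \<equiv> (1 / sqrt 2) *\<^sub>R (ket (0::5) + ket 1)"
      and "ketm \<equiv> (1 / sqrt 2) *\<^sub>R (ket (0::5) - ket 1)"
  defines "E \<equiv> (\<lambda>k::nat.
             if k = 1 then proj (ket (2::5)) + a *\<^sub>R proj (ket 0) + (1 - a) *\<^sub>R proj ketp
             else if k = 2 then proj (ket (3::5)) + a *\<^sub>R proj (ket 1)
             else proj (ket (4::5)) + (1 - a) *\<^sub>R proj ketm)"
  defines "Lam \<equiv> (\<lambda>A::complex^5^5.
             \<Sum>z\<in>{1,2,3::nat}. cscale (trace (A ** proj (ket (of_nat (z + 1) :: 5)))) (E z))"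
  shows "povm {1,2,3::nat} E
       \<and> E 2 ** E 3 \<noteq> E 3 ** E 2
       \<and> (\<forall>k\<in>{1,2,3::nat}. Lam (E k) = E k)
       \<and> no_contextuality_proof {({1,2,3::nat}, E)}"
proof -
  have E: "E = flag_effect a"
    unfolding E_def ketp_def ketm_def flag_effect_def[abs_def] ket_plus_def ket_minus_def ..
  have povm: "povm {1,2,3} E"
    unfolding E by (rule povm_flag_effect) (use assms in auto)
  have fixed: "\<forall>k\<in>{1,2,3::nat}. Lam (E k) = E k"
    unfolding Lam_def E using flag_effect_fixed_point by blast
  have "no_contextuality_proof {({1,2,3::nat}, E)}"
  proof (rule no_contextuality_proof_if_fixed_point[where \<sigma> = "\<lambda>z. proj (ket (of_nat (z + 1)))"])
    show "povm {1,2,3} E" by (fact povm)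
    show "\<forall>z\<in>{1,2,3}. density (proj (ket (of_nat (z + 1) :: 5)))"
      using density_proj_ket by blast
    show "\<forall>k\<in>{1,2,3}. (\<Sum>z\<in>{1,2,3}. cscale (trace (E k ** proj (ket (of_nat (z + 1))))) (E z)) = E k"
      using fixed unfolding Lam_def .
  qed
  with povm fixed show ?thesis
    using flag_effect_not_commute[OF assms(1,2)] by (simp add: E)
qed

end
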